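(* Let $C=(C_1,\dots,C_K)$ with $C_k:=\mathbb{E}[Y_k\mid S_k]$ (classwise-calibrated scores). For $d$ equal to either the Brier divergence $d(P,R)=\sum_{k=1}^K(P_k-R_k)^2$ or the log-loss divergence $d(P,R)=\sum_{k=1}^K R_k\log(R_k/P_k)$ (with the convention $0\log 0=0$), $$\mathbb{E}[d(S,Y)]=\mathbb{E}[d(S,C)]+\mathbb{E}[d(C,Q)]+\mathbb{E}[d(Q,Y)],$$ where the expectation is over $X$ and $Y$.
   Context: Let $(X,Y)$ be jointly distributed with $X\in\mathcal{X}$ and $Y=(Y_1,\dots,Y_K)\in\{e_1,\dots,e_K\}$ (one-hot vectors of $\mathbb{R}^K$); $Q_k:=P(Y=e_k\mid X)$, $Q=(Q_1,\dots,Q_K)$; $S=(S_1,\dots,S_K)=f(X)$ in the probability simplex for a classifier $f$. All required expectations are assumed to exist and be finite. *)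

theory Defs
  imports "HOL-Probability.Probability"
begin

text \<open>Vectors of \<open>R^K\<close> are represented as functions \<open>nat \<Rightarrow> real\<close>, only the
  coordinates \<open>0..<K\<close> being relevant.\<close>

definition brier :: "nat \<Rightarrow> (nat \<Rightarrow> real) \<Rightarrow> (nat \<Rightarrow> real) \<Rightarrow> real" where
  "brier K P R = (\<Sum>k<K. (P k - R k)^2)"

text \<open>Log-loss divergence; the convention \<open>0 log 0 = 0\<close> holds automatically since
  \<open>0 * t = 0\<close>.\<close>
definition logloss :: "nat \<Rightarrow> (nat \<Rightarrow> real) \<Rightarrow> (nat \<Rightarrow> real) \<Rightarrow> real" where
  "logloss K P R = (\<Sum>k<K. R k * ln (R k / P k))"

end

theory Submission
  imports Defs
begin

text \<open>Everything decomposes over the classes. Fix \<open>k\<close>, let \<open>q = E[Y\<^sub>k | \<sigma>(X)]\<close> and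
  \<open>c = E[Y\<^sub>k | \<sigma>(S\<^sub>k)]\<close>, and note \<open>\<sigma>(S\<^sub>k) \<subseteq> \<sigma>(X)\<close>.
  For the Brier score, \<open>h - q\<close> is orthogonal to \<open>q - Y\<^sub>k\<close> for every bounded \<open>\<sigma>(X)\<close>-measurable \<open>h\<close>;
  applying this Pythagoras identity to \<open>h = S\<^sub>k\<close>, and then on \<open>\<sigma>(S\<^sub>k)\<close> to \<open>q\<close>, whose conditional
  expectation is \<open>c\<close> by the tower property, splits \<open>E (S\<^sub>k - Y\<^sub>k)\<^sup>2\<close> into the three terms.
  For the log-loss, \<open>Y\<^sub>k \<in> {0, 1}\<close> gives pointwise
  \<open>Y\<^sub>k ln (Y\<^sub>k / S\<^sub>k) = Y\<^sub>k ln (Y\<^sub>k / q) + Y\<^sub>k ln (q / c) + Y\<^sub>k ln (c / S\<^sub>k)\<close>, and \<open>Y\<^sub>k\<close> may be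
  replaced by \<open>q\<close> (resp. \<open>c\<close>) in the last two terms because their logarithms are
  \<open>\<sigma>(X)\<close>- (resp. \<open>\<sigma>(S\<^sub>k)\<close>-) measurable. Single-class log-loss terms are integrable because
  each is bounded below by \<open>-1\<close> and their sum is integrable.\<close>

lemma subalgebra_vimage_algebra:
  assumes "f \<in> measurable M N"
  shows "subalgebra M (vimage_algebra (space M) f N)"
  using sets_image_in_sets[OF refl assms] by (simp add: subalgebra_def)

lemma diff_le_mult_ln_div:
  fixes x y :: real
  assumes "0 \<le> x" "0 \<le> y" "0 < x \<longrightarrow> 0 < y"
  shows "x - y \<le> x * ln (x / y)"
proof (cases "x = 0")
  case False
  with assms have "0 < x" "0 < y" by auto
  then have "1 - y / x \<le> ln (x / y)"
    using ln_le_minus_one[of "y / x"] by (simp add: ln_div)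
  then have "x * (1 - y / x) \<le> x * ln (x / y)"
    using \<open>0 < x\<close> by (intro mult_left_mono) auto
  moreover have "x * (1 - y / x) = x - y"
    using \<open>0 < x\<close> by (simp add: field_simps)
  ultimately show ?thesis by simp
qed (use assms in simp)

lemma (in finite_measure) integrable_summand_of_bounded_below:
  fixes h :: "'i \<Rightarrow> 'a \<Rightarrow> real"
  assumes "finite I" "i \<in> I" and [measurable]: "\<And>j. j \<in> I \<Longrightarrow> h j \<in> borel_measurable M"
    and lower: "AE x in M. \<forall>j\<in>I. b \<le> h j x"
    and sum: "integrable M (\<lambda>x. \<Sum>j\<in>I. h j x)"
  shows "integrable M (h i)"
proof (rule Bochner_Integration.integrable_bound)
  show "integrable M (\<lambda>x. \<bar>\<Sum>j\<in>I. h j x\<bar> + (card I + 1) * \<bar>b\<bar>)"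
    using sum by auto
  show "AE x in M. norm (h i x) \<le> norm (\<bar>\<Sum>j\<in>I. h j x\<bar> + (card I + 1) * \<bar>b\<bar>)"
    using lower
  proof eventually_elim
    case (elim x)
    have "h i x - b \<le> (\<Sum>j\<in>I. h j x - b)"
      using elim assms(1,2) by (intro member_le_sum) auto
    then have "h i x \<le> (\<Sum>j\<in>I. h j x) - card I * b + b"
      by (simp add: sum_subtractf)
    moreover have "- (card I * b) \<le> card I * \<bar>b\<bar>"
      by (metis abs_ge_minus_self abs_mult abs_of_nat)
    ultimately show ?case
      using elim assms(2) by (auto simp: algebra_simps abs_le_iff)
  qed
qed (use assms(2) in simp)

lemma (in sigma_finite_subalgebra) real_cond_exp_intg_nonneg:
  fixes g y :: "'a \<Rightarrow> real"
  assumes [measurable]: "g \<in> borel_measurable F" "y \<in> borel_measurable M"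
    and y_nonneg: "\<forall>x\<in>space M. 0 \<le> y x" and "integrable M y"
    and int: "integrable M (\<lambda>x. g x * real_cond_exp M F y x)"
  shows "integrable M (\<lambda>x. g x * y x)"
    and "(\<integral>x. g x * y x \<partial>M) = (\<integral>x. g x * real_cond_exp M F y x \<partial>M)"
proof -
  have [measurable]: "g \<in> borel_measurable M"
    by (rule measurable_from_subalg[OF subalg]) simp
  let ?E = "nn_cond_exp M F (\<lambda>x. ennreal (y x))"
  \<comment> \<open>The negative part of \<open>y\<close> vanishes, so the real conditional expectation is \<open>enn2real ?E\<close>.\<close>
  have "AE x in M. nn_cond_exp M F (\<lambda>x. ennreal (- y x)) x = nn_cond_exp M F (\<lambda>x. 0) x"
    using y_nonneg by (intro nn_cond_exp_cong) (auto simp: ennreal_neg)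
  moreover have "AE x in M. 0 = nn_cond_exp M F (\<lambda>x. 0) x"
    by (rule nn_cond_exp_F_meas) auto
  ultimately have enn2real_E: "AE x in M. real_cond_exp M F y x = enn2real (?E x)"
    unfolding real_cond_exp_def by auto
  have "(\<integral>\<^sup>+x. 1 * ?E x \<partial>M) = (\<integral>\<^sup>+x. ennreal (norm (y x)) \<partial>M)"
    using y_nonneg by (subst nn_cond_exp_intg) (auto intro!: nn_integral_cong)
  also have "\<dots> < \<infinity>"
    using \<open>integrable M y\<close> by (simp add: integrable_iff_bounded)
  finally have "AE x in M. ?E x \<noteq> \<infinity>"
    by (intro nn_integral_PInf_AE) auto
  with enn2real_E have E: "AE x in M. 0 \<le> real_cond_exp M F y x \<and> ennreal (real_cond_exp M F y x) = ?E x"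
    by eventually_elim (auto simp: ennreal_enn2real_if)
  have "(\<integral>\<^sup>+x. ennreal (norm (g x * y x)) \<partial>M) = (\<integral>\<^sup>+x. ennreal \<bar>g x\<bar> * ennreal (y x) \<partial>M)"
    using y_nonneg by (intro nn_integral_cong) (auto simp: abs_mult ennreal_mult)
  also have "\<dots> = (\<integral>\<^sup>+x. ennreal \<bar>g x\<bar> * ?E x \<partial>M)"
    by (rule nn_cond_exp_intg[symmetric]) auto
  also have "\<dots> = (\<integral>\<^sup>+x. ennreal (norm (g x * real_cond_exp M F y x)) \<partial>M)"
    using E by (intro nn_integral_cong_AE) (auto simp: abs_mult ennreal_mult)
  also have "\<dots> < \<infinity>"
    using int by (simp add: integrable_iff_bounded)
  finally show gy: "integrable M (\<lambda>x. g x * y x)"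
    by (intro integrableI_bounded) auto
  show "(\<integral>x. g x * y x \<partial>M) = (\<integral>x. g x * real_cond_exp M F y x \<partial>M)"
    using real_cond_exp_intg(2)[OF gy] by simp
qed

lemma (in finite_measure_subalgebra) integral_square_diff_cond_exp:
  fixes h y :: "'a \<Rightarrow> real"
  assumes [measurable]: "h \<in> borel_measurable F" "y \<in> borel_measurable M"
    and h_bound: "AE x in M. \<bar>h x\<bar> \<le> B" and y_bound: "AE x in M. \<bar>y x\<bar> \<le> B"
  shows "(\<integral>x. (h x - y x)\<^sup>2 \<partial>M)
      = (\<integral>x. (h x - real_cond_exp M F y x)\<^sup>2 \<partial>M) + (\<integral>x. (real_cond_exp M F y x - y x)\<^sup>2 \<partial>M)"
proof -
  define q where "q = real_cond_exp M F y"
  have [measurable]: "h \<in> borel_measurable M"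
    by (rule measurable_from_subalg[OF subalg]) simp
  have [measurable]: "q \<in> borel_measurable F" "q \<in> borel_measurable M"
    unfolding q_def by simp_all
  have "integrable M y"
    using y_bound by (intro integrable_const_bound) auto
  moreover have "AE x in M. - B \<le> y x" "AE x in M. y x \<le> B"
    using y_bound by (auto elim!: eventually_mono)
  ultimately have "AE x in M. - B \<le> q x" "AE x in M. q x \<le> B"
    unfolding q_def by (blast intro: real_cond_exp_ge_c real_cond_exp_le_c)+
  then have q_bound: "AE x in M. \<bar>q x\<bar> \<le> B"
    by eventually_elim auto
  have integrable_mult: "integrable M (\<lambda>x. u x * v x)"
    if [measurable]: "u \<in> borel_measurable M" "v \<in> borel_measurable M"
      and "AE x in M. \<bar>u x\<bar> \<le> 2 * B" "AE x in M. \<bar>v x\<bar> \<le> 2 * B" for u v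
  proof (rule integrable_const_bound)
    show "AE x in M. norm (u x * v x) \<le> 2 * B * (2 * B)"
      using that(3,4) by eventually_elim (auto simp only: real_norm_def abs_mult intro!: mult_mono)
  qed simp
  have int_hq: "integrable M (\<lambda>x. (h x - q x)\<^sup>2)"
    and int_qy: "integrable M (\<lambda>x. (q x - y x)\<^sup>2)"
    and int_hqy: "integrable M (\<lambda>x. (h x - q x) * y x)"
    using h_bound y_bound q_bound unfolding power2_eq_square
    by (auto intro!: integrable_mult elim: eventually_elim2)
  have "(\<lambda>x. h x - q x) \<in> borel_measurable F"
    by measurable
  note orthogonal = real_cond_exp_intg[OF int_hqy this \<open>y \<in> borel_measurable M\<close>, folded q_def]
  have "(\<integral>x. (h x - y x)\<^sup>2 \<partial>M)
      = (\<integral>x. (h x - q x)\<^sup>2 + (q x - y x)\<^sup>2 + 2 * ((h x - q x) * q x - (h x - q x) * y x) \<partial>M)"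
    by (rule Bochner_Integration.integral_cong) (simp_all add: power2_eq_square algebra_simps)
  also have "\<dots> = (\<integral>x. (h x - q x)\<^sup>2 \<partial>M) + (\<integral>x. (q x - y x)\<^sup>2 \<partial>M)
      + 2 * ((\<integral>x. (h x - q x) * q x \<partial>M) - (\<integral>x. (h x - q x) * y x \<partial>M))"
    using int_hq int_qy int_hqy orthogonal(1) by simp
  finally show ?thesis
    using orthogonal(2) unfolding q_def by simp
qed

text \<open>\<open>F\<close> stands for \<open>\<sigma>(X)\<close> and \<open>G k\<close> for \<open>\<sigma>(S\<^sub>k)\<close>, so that \<open>posterior\<close> is \<open>Q\<close>
  and \<open>calibrated\<close> is \<open>C\<close>.\<close>

locale classwise_calibration = prob_space M for M :: "'a measure" +
  fixes F :: "'a measure" and G :: "nat \<Rightarrow> 'a measure" and K :: nat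
    and S Y :: "'a \<Rightarrow> nat \<Rightarrow> real"
  assumes subalgebra_F: "subalgebra M F"
    and subalgebra_G: "k < K \<Longrightarrow> subalgebra F (G k)"
    and S_measurable: "k < K \<Longrightarrow> (\<lambda>\<omega>. S \<omega> k) \<in> borel_measurable (G k)"
    and S_unit: "k < K \<Longrightarrow> \<omega> \<in> space M \<Longrightarrow> 0 \<le> S \<omega> k \<and> S \<omega> k \<le> 1"
    and Y_measurable: "k < K \<Longrightarrow> (\<lambda>\<omega>. Y \<omega> k) \<in> borel_measurable M"
    and Y_binary: "k < K \<Longrightarrow> \<omega> \<in> space M \<Longrightarrow> Y \<omega> k = 0 \<or> Y \<omega> k = 1"
begin

definition posterior :: "'a \<Rightarrow> nat \<Rightarrow> real" where
  "posterior \<omega> k = real_cond_exp M F (\<lambda>\<omega>'. Y \<omega>' k) \<omega>"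

definition calibrated :: "'a \<Rightarrow> nat \<Rightarrow> real" where
  "calibrated \<omega> k = real_cond_exp M (G k) (\<lambda>\<omega>'. Y \<omega>' k) \<omega>"

lemma finite_measure_subalgebra_F: "finite_measure_subalgebra M F"
  by unfold_locales (fact subalgebra_F)

lemma subalgebra_M_G: "k < K \<Longrightarrow> subalgebra M (G k)"
  using subalgebra_F subalgebra_G[of k] by (auto simp: subalgebra_def)

lemma finite_measure_subalgebra_G: "k < K \<Longrightarrow> finite_measure_subalgebra M (G k)"
  by unfold_locales (fact subalgebra_M_G)

lemma measurable_S_F: "k < K \<Longrightarrow> (\<lambda>\<omega>. S \<omega> k) \<in> borel_measurable F"
  using measurable_from_subalg[OF subalgebra_G S_measurable] .

lemma measurable_S: "k < K \<Longrightarrow> (\<lambda>\<omega>. S \<omega> k) \<in> borel_measurable M"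
  using measurable_from_subalg[OF subalgebra_F measurable_S_F] .

lemma measurable_posterior [measurable]:
  "(\<lambda>\<omega>. posterior \<omega> k) \<in> borel_measurable F" "(\<lambda>\<omega>. posterior \<omega> k) \<in> borel_measurable M"
  unfolding posterior_def by simp_all

lemma measurable_calibrated [measurable]:
  "(\<lambda>\<omega>. calibrated \<omega> k) \<in> borel_measurable (G k)" "(\<lambda>\<omega>. calibrated \<omega> k) \<in> borel_measurable M"
  unfolding calibrated_def by simp_all

lemma integrable_Y:
  assumes "k < K"
  shows "integrable M (\<lambda>\<omega>. Y \<omega> k)"
  using Y_binary[OF assms] Y_measurable[OF assms]
  by (intro integrable_const_bound[where B=1] AE_I2) force+

lemma AE_unit_interval:
  "AE \<omega> in M. \<forall>k<K. 0 \<le> S \<omega> k \<and> S \<omega> k \<le> 1 \<and> 0 \<le> Y \<omega> k \<and> Y \<omega> k \<le> 1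
     \<and> 0 \<le> posterior \<omega> k \<and> posterior \<omega> k \<le> 1 \<and> 0 \<le> calibrated \<omega> k \<and> calibrated \<omega> k \<le> 1"
proof -
  have cond_exp_unit: "AE \<omega> in M. 0 \<le> real_cond_exp M H (\<lambda>\<omega>. Y \<omega> k) \<omega>
      \<and> real_cond_exp M H (\<lambda>\<omega>. Y \<omega> k) \<omega> \<le> 1"
    if "finite_measure_subalgebra M H" "k < K" for H k
  proof -
    interpret finite_measure_subalgebra M H by fact
    have "AE \<omega> in M. 0 \<le> Y \<omega> k" "AE \<omega> in M. Y \<omega> k \<le> 1"
      using Y_binary[OF \<open>k < K\<close>] by (force intro!: AE_I2)+
    then show ?thesis
      using real_cond_exp_ge_c real_cond_exp_le_c integrable_Y[OF \<open>k < K\<close>] by (simp add: AE_conj_iff)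
  qed
  have "AE \<omega> in M. \<forall>k\<in>{..<K}. 0 \<le> posterior \<omega> k \<and> posterior \<omega> k \<le> 1
      \<and> 0 \<le> calibrated \<omega> k \<and> calibrated \<omega> k \<le> 1"
    unfolding posterior_def calibrated_def
    using cond_exp_unit[OF finite_measure_subalgebra_F] cond_exp_unit[OF finite_measure_subalgebra_G]
    by (intro AE_finite_allI) (auto simp: AE_conj_iff)
  then show ?thesis
    using AE_space by eventually_elim (force dest: S_unit Y_binary)
qed

lemma brier_class_decomposition:
  assumes "k < K"
  shows "(\<integral>\<omega>. (S \<omega> k - Y \<omega> k)\<^sup>2 \<partial>M)
      = (\<integral>\<omega>. (S \<omega> k - calibrated \<omega> k)\<^sup>2 \<partial>M) + (\<integral>\<omega>. (calibrated \<omega> k - posterior \<omega> k)\<^sup>2 \<partial>M)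
        + (\<integral>\<omega>. (posterior \<omega> k - Y \<omega> k)\<^sup>2 \<partial>M)"
proof -
  interpret F: finite_measure_subalgebra M F
    by (rule finite_measure_subalgebra_F)
  interpret Gk: finite_measure_subalgebra M "G k"
    by (rule finite_measure_subalgebra_G[OF assms])
  have bounds: "AE \<omega> in M. \<bar>S \<omega> k\<bar> \<le> 1" "AE \<omega> in M. \<bar>Y \<omega> k\<bar> \<le> 1"
    "AE \<omega> in M. \<bar>posterior \<omega> k\<bar> \<le> 1"
    using AE_unit_interval assms by (auto elim!: eventually_mono)
  have "(\<integral>\<omega>. (S \<omega> k - Y \<omega> k)\<^sup>2 \<partial>M)
      = (\<integral>\<omega>. (S \<omega> k - posterior \<omega> k)\<^sup>2 \<partial>M) + (\<integral>\<omega>. (posterior \<omega> k - Y \<omega> k)\<^sup>2 \<partial>M)"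
    using F.integral_square_diff_cond_exp[OF measurable_S_F[OF assms] Y_measurable[OF assms] bounds(1,2)]
    unfolding posterior_def .
  moreover have "(\<integral>\<omega>. (S \<omega> k - posterior \<omega> k)\<^sup>2 \<partial>M)
      = (\<integral>\<omega>. (S \<omega> k - calibrated \<omega> k)\<^sup>2 \<partial>M) + (\<integral>\<omega>. (calibrated \<omega> k - posterior \<omega> k)\<^sup>2 \<partial>M)"
  proof -
    note [measurable] = measurable_S[OF assms]
    have tower: "AE \<omega> in M. real_cond_exp M (G k) (\<lambda>\<omega>. posterior \<omega> k) \<omega> = calibrated \<omega> k"
      using Gk.real_cond_exp_nested_subalg[OF subalgebra_F subalgebra_G[OF assms] integrable_Y[OF assms]]
      unfolding posterior_def calibrated_def .
    have "(\<integral>\<omega>. (S \<omega> k - real_cond_exp M (G k) (\<lambda>\<omega>. posterior \<omega> k) \<omega>)\<^sup>2 \<partial>M)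
        = (\<integral>\<omega>. (S \<omega> k - calibrated \<omega> k)\<^sup>2 \<partial>M)"
      "(\<integral>\<omega>. (real_cond_exp M (G k) (\<lambda>\<omega>. posterior \<omega> k) \<omega> - posterior \<omega> k)\<^sup>2 \<partial>M)
        = (\<integral>\<omega>. (calibrated \<omega> k - posterior \<omega> k)\<^sup>2 \<partial>M)"
      using tower by (auto intro!: integral_cong_AE elim: eventually_mono)
    then show ?thesis
      using Gk.integral_square_diff_cond_exp[OF S_measurable[OF assms] _ bounds(1,3)] by simp
  qed
  ultimately show ?thesis
    by simp
qed

lemma brier_decomposition:
  "(\<integral>\<omega>. brier K (S \<omega>) (Y \<omega>) \<partial>M)
    = (\<integral>\<omega>. brier K (S \<omega>) (calibrated \<omega>) \<partial>M) + (\<integral>\<omega>. brier K (calibrated \<omega>) (posterior \<omega>) \<partial>M)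
      + (\<integral>\<omega>. brier K (posterior \<omega>) (Y \<omega>) \<partial>M)"
proof -
  have integrable_square: "integrable M (\<lambda>\<omega>. (u \<omega> - v \<omega>)\<^sup>2)"
    if [measurable]: "u \<in> borel_measurable M" "v \<in> borel_measurable M"
      and "AE \<omega> in M. 0 \<le> u \<omega> \<and> u \<omega> \<le> 1 \<and> 0 \<le> v \<omega> \<and> v \<omega> \<le> 1" for u v :: "'a \<Rightarrow> real"
  proof (rule integrable_const_bound[where B=1])
    show "AE \<omega> in M. norm ((u \<omega> - v \<omega>)\<^sup>2) \<le> 1"
      using that(3) by eventually_elim (auto simp: abs_square_le_1)
  qed simp
  have "integrable M (\<lambda>\<omega>. (S \<omega> k - Y \<omega> k)\<^sup>2)" "integrable M (\<lambda>\<omega>. (S \<omega> k - calibrated \<omega> k)\<^sup>2)"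
    "integrable M (\<lambda>\<omega>. (calibrated \<omega> k - posterior \<omega> k)\<^sup>2)" "integrable M (\<lambda>\<omega>. (posterior \<omega> k - Y \<omega> k)\<^sup>2)"
    if "k < K" for k
    using AE_unit_interval that
    by (auto intro!: integrable_square measurable_S Y_measurable elim!: eventually_mono)
  then show ?thesis
    unfolding brier_def by (simp add: Bochner_Integration.integral_sum brier_class_decomposition sum.distrib)
qed

lemma logloss_class_decomposition:
  assumes k: "k < K"
    and pos_QY: "AE \<omega> in M. 0 < Y \<omega> k \<longrightarrow> 0 < posterior \<omega> k"
    and pos_CQ: "AE \<omega> in M. 0 < posterior \<omega> k \<longrightarrow> 0 < calibrated \<omega> k"
    and pos_SC: "AE \<omega> in M. 0 < calibrated \<omega> k \<longrightarrow> 0 < S \<omega> k"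
    and int_SC: "integrable M (\<lambda>\<omega>. calibrated \<omega> k * ln (calibrated \<omega> k / S \<omega> k))"
    and int_CQ: "integrable M (\<lambda>\<omega>. posterior \<omega> k * ln (posterior \<omega> k / calibrated \<omega> k))"
    and int_QY: "integrable M (\<lambda>\<omega>. Y \<omega> k * ln (Y \<omega> k / posterior \<omega> k))"
  shows "(\<integral>\<omega>. Y \<omega> k * ln (Y \<omega> k / S \<omega> k) \<partial>M)
      = (\<integral>\<omega>. calibrated \<omega> k * ln (calibrated \<omega> k / S \<omega> k) \<partial>M)
        + (\<integral>\<omega>. posterior \<omega> k * ln (posterior \<omega> k / calibrated \<omega> k) \<partial>M)
        + (\<integral>\<omega>. Y \<omega> k * ln (Y \<omega> k / posterior \<omega> k) \<partial>M)"
proof -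
  interpret F: finite_measure_subalgebra M F
    by (rule finite_measure_subalgebra_F)
  interpret Gk: finite_measure_subalgebra M "G k"
    by (rule finite_measure_subalgebra_G[OF k])
  note [measurable] = S_measurable[OF k] measurable_S[OF k] Y_measurable[OF k]
    measurable_from_subalg[OF subalgebra_G[OF k] measurable_calibrated(1)]
  have Y_nonneg: "\<forall>\<omega>\<in>space M. 0 \<le> Y \<omega> k"
    using Y_binary[OF k] by force
  have QC: "integrable M (\<lambda>\<omega>. ln (posterior \<omega> k / calibrated \<omega> k) * Y \<omega> k)"
    "(\<integral>\<omega>. ln (posterior \<omega> k / calibrated \<omega> k) * Y \<omega> k \<partial>M)
      = (\<integral>\<omega>. posterior \<omega> k * ln (posterior \<omega> k / calibrated \<omega> k) \<partial>M)"
    using F.real_cond_exp_intg_nonneg[of "\<lambda>\<omega>. ln (posterior \<omega> k / calibrated \<omega> k)" "\<lambda>\<omega>. Y \<omega> k"]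
      Y_nonneg integrable_Y[OF k] int_CQ
    by (auto simp: posterior_def mult.commute)
  have CS: "integrable M (\<lambda>\<omega>. ln (calibrated \<omega> k / S \<omega> k) * Y \<omega> k)"
    "(\<integral>\<omega>. ln (calibrated \<omega> k / S \<omega> k) * Y \<omega> k \<partial>M)
      = (\<integral>\<omega>. calibrated \<omega> k * ln (calibrated \<omega> k / S \<omega> k) \<partial>M)"
    using Gk.real_cond_exp_intg_nonneg[of "\<lambda>\<omega>. ln (calibrated \<omega> k / S \<omega> k)" "\<lambda>\<omega>. Y \<omega> k"]
      Y_nonneg integrable_Y[OF k] int_SC
    by (auto simp: calibrated_def mult.commute)
  \<comment> \<open>Both sides vanish where \<open>Y \<omega> k = 0\<close>; where it is \<open>1\<close>, all three ratios are positive.\<close>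
  have "AE \<omega> in M. Y \<omega> k * ln (Y \<omega> k / S \<omega> k)
      = Y \<omega> k * ln (Y \<omega> k / posterior \<omega> k) + ln (posterior \<omega> k / calibrated \<omega> k) * Y \<omega> k
        + ln (calibrated \<omega> k / S \<omega> k) * Y \<omega> k"
    using pos_QY pos_CQ pos_SC AE_space
  proof eventually_elim
    case (elim \<omega>)
    then show ?case
      using Y_binary[OF k, of \<omega>] by (auto simp: ln_div)
  qed
  then have "(\<integral>\<omega>. Y \<omega> k * ln (Y \<omega> k / S \<omega> k) \<partial>M)
      = (\<integral>\<omega>. Y \<omega> k * ln (Y \<omega> k / posterior \<omega> k) \<partial>M)
        + (\<integral>\<omega>. ln (posterior \<omega> k / calibrated \<omega> k) * Y \<omega> k \<partial>M)
        + (\<integral>\<omega>. ln (calibrated \<omega> k / S \<omega> k) * Y \<omega> k \<partial>M)"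
    using int_QY QC(1) CS(1) by (subst integral_cong_AE) auto
  then show ?thesis
    using QC(2) CS(2) by simp
qed

lemma logloss_decomposition:
  assumes int_SY: "integrable M (\<lambda>\<omega>. logloss K (S \<omega>) (Y \<omega>))"
    and int_SC: "integrable M (\<lambda>\<omega>. logloss K (S \<omega>) (calibrated \<omega>))"
    and int_CQ: "integrable M (\<lambda>\<omega>. logloss K (calibrated \<omega>) (posterior \<omega>))"
    and int_QY: "integrable M (\<lambda>\<omega>. logloss K (posterior \<omega>) (Y \<omega>))"
    and pos_SY: "AE \<omega> in M. \<forall>k<K. Y \<omega> k > 0 \<longrightarrow> S \<omega> k > 0"
    and pos_SC: "AE \<omega> in M. \<forall>k<K. calibrated \<omega> k > 0 \<longrightarrow> S \<omega> k > 0"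
    and pos_CQ: "AE \<omega> in M. \<forall>k<K. posterior \<omega> k > 0 \<longrightarrow> calibrated \<omega> k > 0"
    and pos_QY: "AE \<omega> in M. \<forall>k<K. Y \<omega> k > 0 \<longrightarrow> posterior \<omega> k > 0"
  shows "(\<integral>\<omega>. logloss K (S \<omega>) (Y \<omega>) \<partial>M)
    = (\<integral>\<omega>. logloss K (S \<omega>) (calibrated \<omega>) \<partial>M)
      + (\<integral>\<omega>. logloss K (calibrated \<omega>) (posterior \<omega>) \<partial>M)
      + (\<integral>\<omega>. logloss K (posterior \<omega>) (Y \<omega>) \<partial>M)"
proof -
  have "AE \<omega> in M. \<forall>k\<in>{..<K}. -1 \<le> Y \<omega> k * ln (Y \<omega> k / S \<omega> k)
      \<and> -1 \<le> calibrated \<omega> k * ln (calibrated \<omega> k / S \<omega> k)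
      \<and> -1 \<le> posterior \<omega> k * ln (posterior \<omega> k / calibrated \<omega> k)
      \<and> -1 \<le> Y \<omega> k * ln (Y \<omega> k / posterior \<omega> k)"
    using AE_unit_interval pos_SY pos_SC pos_CQ pos_QY
  proof eventually_elim
    case (elim \<omega>)
    have "-1 \<le> r * ln (r / p)" if "0 \<le> r" "0 \<le> p" "p \<le> 1" "0 < r \<longrightarrow> 0 < p" for r p :: real
      using diff_le_mult_ln_div[OF that(1,2,4)] that by linarith
    with elim show ?case
      by auto
  qed
  then have integrable_terms: "integrable M (\<lambda>\<omega>. Y \<omega> k * ln (Y \<omega> k / S \<omega> k))"
    "integrable M (\<lambda>\<omega>. calibrated \<omega> k * ln (calibrated \<omega> k / S \<omega> k))"
    "integrable M (\<lambda>\<omega>. posterior \<omega> k * ln (posterior \<omega> k / calibrated \<omega> k))"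
    "integrable M (\<lambda>\<omega>. Y \<omega> k * ln (Y \<omega> k / posterior \<omega> k))"
    if "k < K" for k
    using int_SY int_SC int_CQ int_QY that unfolding logloss_def
    by (auto intro!: integrable_summand_of_bounded_below[where I="{..<K}" and b="-1"]
        borel_measurable_times borel_measurable_ln borel_measurable_divide measurable_S Y_measurable
        elim!: eventually_mono)
  have "(\<integral>\<omega>. Y \<omega> k * ln (Y \<omega> k / S \<omega> k) \<partial>M)
      = (\<integral>\<omega>. calibrated \<omega> k * ln (calibrated \<omega> k / S \<omega> k) \<partial>M)
        + (\<integral>\<omega>. posterior \<omega> k * ln (posterior \<omega> k / calibrated \<omega> k) \<partial>M)
        + (\<integral>\<omega>. Y \<omega> k * ln (Y \<omega> k / posterior \<omega> k) \<partial>M)" if k: "k < K" for k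
  proof (rule logloss_class_decomposition[OF k _ _ _ integrable_terms(2-4)[OF k]])
    show "AE \<omega> in M. 0 < Y \<omega> k \<longrightarrow> 0 < posterior \<omega> k"
      using pos_QY by eventually_elim (use k in auto)
    show "AE \<omega> in M. 0 < posterior \<omega> k \<longrightarrow> 0 < calibrated \<omega> k"
      using pos_CQ by eventually_elim (use k in auto)
    show "AE \<omega> in M. 0 < calibrated \<omega> k \<longrightarrow> 0 < S \<omega> k"
      using pos_SC by eventually_elim (use k in auto)
  qed
  with integrable_terms show ?thesis
    unfolding logloss_def by (simp add: Bochner_Integration.integral_sum sum.distrib)
qed

end

lemma classwise_calibration_scores:
  fixes X :: "'a \<Rightarrow> 'x" and f :: "'x \<Rightarrow> nat \<Rightarrow> real"
  assumes M: "prob_space M"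
    and X: "X \<in> measurable M N"
    and Y_meas: "\<forall>k<K. (\<lambda>\<omega>. Y \<omega> k) \<in> borel_measurable M"
    and Y_onehot: "\<forall>\<omega>\<in>space M. \<exists>j<K. \<forall>k<K. Y \<omega> k = (if k = j then 1 else 0)"
    and f_meas: "\<forall>k<K. (\<lambda>x. f x k) \<in> borel_measurable N"
    and f_simplex: "\<forall>x\<in>space N. (\<forall>k<K. 0 \<le> f x k) \<and> (\<Sum>k<K. f x k) = 1"
  shows "classwise_calibration M (vimage_algebra (space M) X N)
    (\<lambda>k. vimage_algebra (space M) (\<lambda>\<omega>. f (X \<omega>) k) borel) K (\<lambda>\<omega> k. f (X \<omega>) k) Y"
    (is "classwise_calibration M ?F ?G K ?S Y")
proof (intro classwise_calibration.intro[OF M] classwise_calibration_axioms.intro)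
  have X_F: "X \<in> measurable ?F N"
    using measurable_space[OF X] by (intro measurable_vimage_algebra1) auto
  show "subalgebra M ?F"
    using X by (rule subalgebra_vimage_algebra)
  show "subalgebra ?F (?G k)" if "k < K" for k
    using subalgebra_vimage_algebra[OF measurable_compose[OF X_F f_meas[rule_format, OF that]]]
    by simp
  show "(\<lambda>\<omega>. ?S \<omega> k) \<in> borel_measurable (?G k)" for k
    by (intro measurable_vimage_algebra1) simp
  show "0 \<le> ?S \<omega> k \<and> ?S \<omega> k \<le> 1" if "k < K" "\<omega> \<in> space M" for k \<omega>
  proof -
    have "X \<omega> \<in> space N"
      using measurable_space[OF X] that(2) .
    then have "\<forall>j<K. 0 \<le> f (X \<omega>) j" "(\<Sum>j<K. f (X \<omega>) j) = 1"
      using f_simplex by auto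
    moreover have "f (X \<omega>) k \<le> (\<Sum>j<K. f (X \<omega>) j)"
      using calculation(1) that(1) by (intro member_le_sum) auto
    ultimately show ?thesis
      using that(1) by simp
  qed
  show "(\<lambda>\<omega>. Y \<omega> k) \<in> borel_measurable M" if "k < K" for k
    using Y_meas that by simp
  show "Y \<omega> k = 0 \<or> Y \<omega> k = 1" if k: "k < K" and \<omega>: "\<omega> \<in> space M" for k \<omega>
  proof -
    obtain j where "\<forall>k<K. Y \<omega> k = (if k = j then 1 else 0)"
      using Y_onehot \<omega> by blast
    then show ?thesis
      using k by simp
  qed
qed

theorem proposition6:
  fixes M :: "'a measure" and N :: "'x measure" and X :: "'a \<Rightarrow> 'x"
    and Y :: "'a \<Rightarrow> nat \<Rightarrow> real" and f :: "'x \<Rightarrow> nat \<Rightarrow> real" and K :: nat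
    and d :: "(nat \<Rightarrow> real) \<Rightarrow> (nat \<Rightarrow> real) \<Rightarrow> real"
  assumes M: "prob_space M"
    and X: "X \<in> measurable M N"
    and Y_meas: "\<forall>k<K. (\<lambda>\<omega>. Y \<omega> k) \<in> borel_measurable M"
    and Y_onehot: "\<forall>\<omega>\<in>space M. \<exists>j<K. \<forall>k<K. Y \<omega> k = (if k = j then 1 else 0)"
    and f_meas: "\<forall>k<K. (\<lambda>x. f x k) \<in> borel_measurable N"
    and f_simplex: "\<forall>x\<in>space N. (\<forall>k<K. 0 \<le> f x k) \<and> (\<Sum>k<K. f x k) = 1"
    and d: "d = brier K \<or> d = logloss K"
  defines "S \<equiv> \<lambda>\<omega> k. f (X \<omega>) k"
    and "Q \<equiv> \<lambda>\<omega> k. real_cond_exp M (vimage_algebra (space M) X N) (\<lambda>\<omega>'. Y \<omega>' k) \<omega>"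
    and "C \<equiv> \<lambda>\<omega> k. real_cond_exp M (vimage_algebra (space M) (\<lambda>\<omega>'. f (X \<omega>') k) borel)
                                   (\<lambda>\<omega>'. Y \<omega>' k) \<omega>"
  assumes int_SY: "integrable M (\<lambda>\<omega>. d (S \<omega>) (Y \<omega>))"
    and int_SC: "integrable M (\<lambda>\<omega>. d (S \<omega>) (C \<omega>))"
    and int_CQ: "integrable M (\<lambda>\<omega>. d (C \<omega>) (Q \<omega>))"
    and int_QY: "integrable M (\<lambda>\<omega>. d (Q \<omega>) (Y \<omega>))"
    and fin_SY: "d = logloss K \<Longrightarrow> AE \<omega> in M. \<forall>k<K. Y \<omega> k > 0 \<longrightarrow> S \<omega> k > 0"
    and fin_SC: "d = logloss K \<Longrightarrow> AE \<omega> in M. \<forall>k<K. C \<omega> k > 0 \<longrightarrow> S \<omega> k > 0"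
    and fin_CQ: "d = logloss K \<Longrightarrow> AE \<omega> in M. \<forall>k<K. Q \<omega> k > 0 \<longrightarrow> C \<omega> k > 0"
    and fin_QY: "d = logloss K \<Longrightarrow> AE \<omega> in M. \<forall>k<K. Y \<omega> k > 0 \<longrightarrow> Q \<omega> k > 0"
  shows "(\<integral>\<omega>. d (S \<omega>) (Y \<omega>) \<partial>M)
           = (\<integral>\<omega>. d (S \<omega>) (C \<omega>) \<partial>M) + (\<integral>\<omega>. d (C \<omega>) (Q \<omega>) \<partial>M)
             + (\<integral>\<omega>. d (Q \<omega>) (Y \<omega>) \<partial>M)"
proof -
  interpret classwise_calibration M "vimage_algebra (space M) X N"
    "\<lambda>k. vimage_algebra (space M) (\<lambda>\<omega>. f (X \<omega>) k) borel" K S Y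
    unfolding S_def using classwise_calibration_scores[OF M X Y_meas Y_onehot f_meas f_simplex] .
  have QC: "Q = posterior" "C = calibrated"
    unfolding posterior_def calibrated_def by (simp_all add: fun_eq_iff Q_def C_def)
  from d show ?thesis
  proof
    assume "d = brier K"
    then show ?thesis
      unfolding QC by (simp add: brier_decomposition)
  next
    assume "d = logloss K"
    then show ?thesis
      using logloss_decomposition int_SY int_SC int_CQ int_QY fin_SY fin_SC fin_CQ fin_QY
      unfolding QC by simp
  qed
qed

end
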